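(* Fix $\epsilon_2>0$ and $(u_\pm,v_\pm)$ with $v_\pm>0$ and $u_->u_++2\epsilon_2$. For $0<\epsilon_1$ small, let $(u_*^{\epsilon_2},v_*^{\epsilon_2})$ (depending on $\epsilon_1$) be the intermediate state of the two-shock Riemann solution of the perturbed Brio system with data $(u_\pm,v_\pm)$. Then $\lim_{\epsilon_1\to0}v_*^{\epsilon_2}=+\infty$.
   Context: Perturbed Brio system: $u_t+(\tfrac12u^2+\tfrac12\epsilon_1v^2)_x=0$, $v_t+(uv-\epsilon_2v)_x=0$, $\epsilon_1,\epsilon_2>0$, $v>0$. The two-shock intermediate state $(u_*,v_* )$ satisfies $v_*>\max(v_-,v_+)$, $u_+<u_*<u_-$, $$u_*=u_-+(v_*-v_-)\frac{\epsilon_2-\sqrt{\epsilon_2^2+4\epsilon_1(v_*+v_-)^2}}{v_*+v_-},\qquad u_+=u_*+(v_+-v_* )\frac{\epsilon_2+\sqrt{\epsilon_2^2+4\epsilon_1(v_*+v_+)^2}}{v_*+v_+}.$$ *)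

theory Defs
  imports Complex_Main
begin

text \<open>Two-shock intermediate state (u_*, v_*) of the perturbed Brio system
  u_t + (u^2/2 + e1 v^2/2)_x = 0,  v_t + (u v - e2 v)_x = 0
  with Riemann data (u_-, v_-), (u_+, v_+).\<close>

definition two_shock_state ::
  "real \<Rightarrow> real \<Rightarrow> real \<Rightarrow> real \<Rightarrow> real \<Rightarrow> real \<Rightarrow> real \<Rightarrow> real \<Rightarrow> bool" where
  "two_shock_state e1 e2 um vm up vp us vs \<longleftrightarrow>
     vs > max vm vp \<and> up < us \<and> us < um \<and>
     us = um + (vs - vm) * (e2 - sqrt (e2^2 + 4 * e1 * (vs + vm)^2)) / (vs + vm) \<and>
     up = us + (vp - vs) * (e2 + sqrt (e2^2 + 4 * e1 * (vs + vp)^2)) / (vs + vp)"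

end

theory Submission
  imports Defs
begin

text \<open>Reading both shock curves as functions of \<open>v\<^sub>*\<close>, the intermediate state is a root of
  \<open>J(v) = (u\<^sub>- - u\<^sub>*) + (u\<^sub>* - u\<^sub>+) = u\<^sub>- - u\<^sub>+\<close>.  For \<open>max v\<^sub>- v\<^sub>+ \<le> v \<le> M\<close> both square
  roots are at most \<open>sqrt (\<epsilon>\<^sub>2\<^sup>2 + 16 \<epsilon>\<^sub>1 M\<^sup>2)\<close>, so \<open>J(v) \<le> 2 sqrt (\<epsilon>\<^sub>2\<^sup>2 + 16 \<epsilon>\<^sub>1 M\<^sup>2)\<close>, which
  tends to \<open>2\<epsilon>\<^sub>2 < u\<^sub>- - u\<^sub>+\<close> as \<open>\<epsilon>\<^sub>1 \<rightarrow> 0\<close>: for small \<open>\<epsilon>\<^sub>1\<close> every root exceeds \<open>M\<close>.  Roots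
  exist by the intermediate value theorem, because \<open>J(v) \<ge> sqrt \<epsilon>\<^sub>1 v - \<epsilon>\<^sub>2/2\<close>.\<close>

definition shock1_jump :: "real \<Rightarrow> real \<Rightarrow> real \<Rightarrow> real \<Rightarrow> real" where
  "shock1_jump e1 e2 vm v = (v - vm) * (sqrt (e2^2 + 4 * e1 * (v + vm)^2) - e2) / (v + vm)"

definition shock2_jump :: "real \<Rightarrow> real \<Rightarrow> real \<Rightarrow> real \<Rightarrow> real" where
  "shock2_jump e1 e2 vp v = (v - vp) * (e2 + sqrt (e2^2 + 4 * e1 * (v + vp)^2)) / (v + vp)"

definition total_jump :: "real \<Rightarrow> real \<Rightarrow> real \<Rightarrow> real \<Rightarrow> real \<Rightarrow> real" where
  "total_jump e1 e2 vm vp v = shock1_jump e1 e2 vm v + shock2_jump e1 e2 vp v"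

lemma sqrt_square_add_ge: "(e::real) \<le> sqrt (e^2 + x)" "- e \<le> sqrt (e^2 + x)" if "0 \<le> x"
proof -
  have "\<bar>e\<bar> \<le> sqrt (e^2 + x)"
    using real_sqrt_le_mono[of "e^2" "e^2 + x"] that by simp
  then show "e \<le> sqrt (e^2 + x)" "- e \<le> sqrt (e^2 + x)" by linarith+
qed

lemma sqrt_square_add_gt: "(e::real) < sqrt (e^2 + x)" "- e < sqrt (e^2 + x)" if "0 < x"
proof -
  have "\<bar>e\<bar> < sqrt (e^2 + x)"
    using real_sqrt_less_mono[of "e^2" "e^2 + x"] that by simp
  then show "e < sqrt (e^2 + x)" "- e < sqrt (e^2 + x)" by linarith+
qed

lemma shock1_jump_pos:
  assumes "0 < e1" "0 < vm" "vm < v"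
  shows "0 < shock1_jump e1 e2 vm v"
  using sqrt_square_add_gt(1)[of "4 * e1 * (v + vm)^2" e2] assms
  unfolding shock1_jump_def by simp

lemma shock2_jump_pos:
  assumes "0 < e1" "0 < vp" "vp < v"
  shows "0 < shock2_jump e1 e2 vp v"
  using sqrt_square_add_gt(2)[of "4 * e1 * (v + vp)^2" e2] assms
  unfolding shock2_jump_def by (simp add: add.commute)

lemma two_shock_state_iff:
  assumes "0 < e1" "0 < vm" "0 < vp"
  shows "two_shock_state e1 e2 um vm up vp us vs \<longleftrightarrow>
    max vm vp < vs \<and> us = um - shock1_jump e1 e2 vm vs \<and> up = us - shock2_jump e1 e2 vp vs"
proof -
  have "(vs - vm) * (e2 - s) / (vs + vm) = - ((vs - vm) * (s - e2) / (vs + vm))"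
    "(vp - vs) * (e2 + t) / (vs + vp) = - ((vs - vp) * (e2 + t) / (vs + vp))" for s t
    by (simp_all add: algebra_simps minus_divide_left)
  then have jumps:
    "um + (vs - vm) * (e2 - sqrt (e2^2 + 4 * e1 * (vs + vm)^2)) / (vs + vm)
       = um - shock1_jump e1 e2 vm vs"
    "us + (vp - vs) * (e2 + sqrt (e2^2 + 4 * e1 * (vs + vp)^2)) / (vs + vp)
       = us - shock2_jump e1 e2 vp vs"
    unfolding shock1_jump_def shock2_jump_def by simp_all
  show ?thesis
    unfolding two_shock_state_def jumps
    using shock1_jump_pos[OF assms(1,2), of vs e2] shock2_jump_pos[OF assms(1,3), of vs e2]
    by auto
qed

lemma diff_mult_div_sum_le:
  fixes a b c :: real
  assumes "0 < b" "b \<le> a" "0 \<le> c"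
  shows "(a - b) * c / (a + b) \<le> c"
  using assms mult_right_mono[of "a - b" "a + b" c] by (simp add: pos_divide_le_eq mult.commute)

lemma total_jump_le:
  assumes "0 \<le> e1" "0 < vm" "0 < vp" "max vm vp \<le> v" "v \<le> M"
  shows "total_jump e1 e2 vm vp v \<le> 2 * sqrt (e2^2 + 16 * e1 * M^2)"
proof -
  define B where "B = sqrt (e2^2 + 16 * e1 * M^2)"
  have root_le_B: "sqrt (e2^2 + 4 * e1 * (v + w)^2) \<le> B" if "0 < w" "w \<le> v" for w
  proof -
    have "(v + w)^2 \<le> (2 * M)^2"
      using that assms by (intro power_mono) auto
    then have "4 * e1 * (v + w)^2 \<le> 16 * e1 * M^2"
      using mult_left_mono[of "(v + w)^2" "(2 * M)^2" "4 * e1"] assms(1)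
      by (simp add: power_mult_distrib)
    then show ?thesis
      unfolding B_def by simp
  qed
  have "shock1_jump e1 e2 vm v \<le> sqrt (e2^2 + 4 * e1 * (v + vm)^2) - e2"
    unfolding shock1_jump_def using assms sqrt_square_add_ge(1)[of "4 * e1 * (v + vm)^2" e2]
    by (intro diff_mult_div_sum_le) auto
  moreover have "shock2_jump e1 e2 vp v \<le> e2 + sqrt (e2^2 + 4 * e1 * (v + vp)^2)"
    unfolding shock2_jump_def using assms sqrt_square_add_ge(2)[of "4 * e1 * (v + vp)^2" e2]
    by (intro diff_mult_div_sum_le) auto
  ultimately show ?thesis
    unfolding total_jump_def B_def[symmetric]
    using root_le_B[of vm] root_le_B[of vp] assms by auto
qed

lemma total_jump_ge:
  assumes "0 \<le> e1" "0 < vm" "0 < vp" "3 * vm \<le> v" "vp \<le> v"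
  shows "sqrt e1 * v - e2 / 2 \<le> total_jump e1 e2 vm vp v"
proof -
  define s where "s = sqrt (e2^2 + 4 * e1 * (v + vm)^2)"
  have "2 * sqrt e1 * (v + vm) = sqrt (4 * e1 * (v + vm)^2)"
    using assms by (simp add: real_sqrt_mult)
  also have "\<dots> \<le> s"
    unfolding s_def by simp
  finally have root_ge: "2 * sqrt e1 * v \<le> s"
    using mult_left_mono[of v "v + vm" "2 * sqrt e1"] assms by simp
  have ratio: "1 / 2 \<le> (v - vm) / (v + vm)"
    using assms by (simp add: le_divide_eq)
  have "(1 / 2) * (s - e2) \<le> (v - vm) / (v + vm) * (s - e2)"
    using ratio sqrt_square_add_ge(1)[of "4 * e1 * (v + vm)^2" e2] assms
    unfolding s_def by (intro mult_right_mono) auto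
  also have "\<dots> = shock1_jump e1 e2 vm v"
    unfolding shock1_jump_def s_def by simp
  finally have "sqrt e1 * v - e2 / 2 \<le> shock1_jump e1 e2 vm v"
    using root_ge by simp
  moreover have "0 \<le> shock2_jump e1 e2 vp v"
    unfolding shock2_jump_def using assms sqrt_square_add_ge(2)[of "4 * e1 * (v + vp)^2" e2]
    by (intro divide_nonneg_pos mult_nonneg_nonneg) auto
  ultimately show ?thesis
    unfolding total_jump_def by simp
qed

lemma two_shock_state_exists:
  assumes "0 < e1" "0 < vm" "0 < vp" "total_jump e1 e2 vm vp (max vm vp) < um - up"
  shows "\<exists>us vs. two_shock_state e1 e2 um vm up vp us vs"
proof -
  define m where "m = max vm vp"
  define D where "D = um - up"
  define V where "V = max (3 * vm) (max m ((D + e2 / 2) / sqrt e1))"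
  have "m \<le> V" "3 * vm \<le> V" "vp \<le> V" "(D + e2 / 2) / sqrt e1 \<le> V"
    unfolding V_def m_def by auto
  then have "D \<le> sqrt e1 * V - e2 / 2"
    using assms(1) by (simp add: pos_divide_le_eq mult.commute)
  then have "D \<le> total_jump e1 e2 vm vp V"
    using total_jump_ge[of e1 vm vp V e2] \<open>3 * vm \<le> V\<close> \<open>vp \<le> V\<close> assms by simp
  moreover have "continuous_on {m..V} (total_jump e1 e2 vm vp)"
    unfolding total_jump_def shock1_jump_def shock2_jump_def m_def using assms
    by (intro continuous_intros) auto
  ultimately obtain v where v: "m \<le> v" "v \<le> V" "total_jump e1 e2 vm vp v = D"
    using IVT'[of "total_jump e1 e2 vm vp" m D V] assms(4) \<open>m \<le> V\<close>
    unfolding m_def D_def by auto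
  then have "max vm vp < v"
    using assms(4) unfolding m_def D_def by (cases "v = m") (auto simp: m_def)
  with v(3) show ?thesis
    using two_shock_state_iff[OF assms(1-3)] unfolding total_jump_def D_def by auto
qed

lemma eventually_total_jump_less:
  assumes "0 < e2" "0 < vm" "0 < vp" "2 * e2 < D"
  shows "\<forall>\<^sub>F e1 in at_right 0. 0 < e1 \<and>
           (\<forall>v. max vm vp \<le> v \<and> v \<le> M \<longrightarrow> total_jump e1 e2 vm vp v < D)"
proof -
  have "((\<lambda>e1. 2 * sqrt (e2^2 + 16 * e1 * M^2)) \<longlongrightarrow> 2 * sqrt (e2^2 + 16 * 0 * M^2))
          (at_right 0)"
    by (intro tendsto_intros)
  then have "\<forall>\<^sub>F e1 in at_right 0. 2 * sqrt (e2^2 + 16 * e1 * M^2) < D"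
    using assms by (intro order_tendstoD(2)) auto
  moreover have "\<forall>\<^sub>F e1 in at_right 0. (0::real) < e1"
    by (simp add: eventually_at_right_less)
  ultimately show ?thesis
  proof eventually_elim
    case (elim e1)
    then show ?case
      using total_jump_le[of e1 vm vp _ M e2] assms by force
  qed
qed

theorem lemma6p1:
  fixes e2 um vm up vp :: real
  assumes "e2 > 0" and "vm > 0" and "vp > 0" and "um > up + 2 * e2"
  shows "(\<forall>\<^sub>F e1 in at_right 0. \<exists>us vs. two_shock_state e1 e2 um vm up vp us vs)
    \<and> (\<forall>ustar vstar :: real \<Rightarrow> real.
          (\<forall>\<^sub>F e1 in at_right 0. two_shock_state e1 e2 um vm up vp (ustar e1) (vstar e1))
          \<longrightarrow> filterlim vstar at_top (at_right 0))"
proof (intro conjI allI impI)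
  have gap: "2 * e2 < um - up"
    using assms(4) by simp
  note small = eventually_total_jump_less[OF assms(1-3) gap]
  show "\<forall>\<^sub>F e1 in at_right 0. \<exists>us vs. two_shock_state e1 e2 um vm up vp us vs"
    using small[of "max vm vp"]
    by eventually_elim (use two_shock_state_exists assms(2,3) in auto)
  fix ustar vstar :: "real \<Rightarrow> real"
  assume states: "\<forall>\<^sub>F e1 in at_right 0. two_shock_state e1 e2 um vm up vp (ustar e1) (vstar e1)"
  show "filterlim vstar at_top (at_right 0)"
    unfolding filterlim_at_top
  proof
    fix Z :: real
    show "\<forall>\<^sub>F e1 in at_right 0. Z \<le> vstar e1"
      using small[of "max Z (max vm vp)"] states
    proof eventually_elim
      case (elim e1)
      then have "max vm vp < vstar e1" "total_jump e1 e2 vm vp (vstar e1) = um - up"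
        using two_shock_state_iff[of e1 vm vp e2 um up "ustar e1" "vstar e1"] assms(2,3)
        unfolding total_jump_def by auto
      then show ?case
        using elim by (metis less_le_not_le linorder_not_le max.strict_coboundedI1)
    qed
  qed
qed

end
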